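(* Let $f(z)=\sum_{k\ge0}f_kz^k$ be holomorphic on the open unit disk, let $0<r<1$, and suppose that $f-P_n$ has $N$ zeros (counted with multiplicity) in $\overline\Delta_r=\{|z|\le r\}$, where $P_n$ is a polynomial of degree at most $n$. There exist positive constants $A\ge1$, $a<1$ and $\delta$, depending only on $r$, such that: if $N\ge A(n+1)$, then $$|f_k|\le\frac{M(R,f)}{R_+^{\,n+1}}\,a^N$$ for all integers $k$ with $n<k\le\delta N$ and every $R\ge (r+2)/3$ such that $f$ is holomorphic on a neighborhood of $\overline\Delta_R$.
   Context: $M(R,f)=\max\{|f(z)|:|z|=R\}$ and $R_+=\max\{R,1\}$. *)

theory Defs
  imports "HOL-Complex_Analysis.Complex_Analysis" "HOL-Computational_Algebra.Polynomial"
begin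

definition max_mod :: "real \<Rightarrow> (complex \<Rightarrow> complex) \<Rightarrow> real" where
  "max_mod R f = Sup ((\<lambda>z. norm (f z)) ` sphere 0 R)"

definition zero_count :: "(complex \<Rightarrow> complex) \<Rightarrow> complex set \<Rightarrow> nat" where
  "zero_count g S = (\<Sum>z\<in>{z\<in>S. g z = 0}. nat (zorder g z))"

definition taylor_coeff :: "(complex \<Rightarrow> complex) \<Rightarrow> nat \<Rightarrow> complex" where
  "taylor_coeff f k = (deriv ^^ k) f 0 / of_nat (fact k)"

end

theory Submission
  imports Defs
begin

text \<open>Write g = f - P. Dividing g by the Blaschke factor R (z - w) / (R^2 - conj w z) of a zero w
  with |w| <= r does not change |g| on |z| = R, so by the maximum principle
  |g| <= c^N M(R,g) on a small disc |z| <= s, where c < 1 bounds these factors uniformly in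
  R >= (r+2)/3. There P is within c^N M(R,g) of f, and the Bernstein-Walsh inequality carries
  this to |z| = R: once N is large compared with n, M(R,g) <= 4 (R/s)^n M(R,f). As P has degree
  less than k, f and g share their k-th Taylor coefficient, and Cauchy's estimate on |z| = s gives
  the bound once k is small compared with N.\<close>

lemma higher_deriv_poly: "(deriv ^^ k) (poly P) = poly ((pderiv ^^ k) (P :: complex poly))"
proof (induction k)
  case (Suc k)
  show ?case by (simp add: Suc fun_eq_iff DERIV_imp_deriv[OF poly_DERIV])
qed simp

lemma degree_pderiv_funpow: "degree ((pderiv ^^ k) P) = degree P - k"
  for P :: "'a::{idom, ring_char_0} poly"
  by (induction k) (auto simp: degree_pderiv)

lemma pderiv_funpow_eq_0:
  fixes P :: "'a::{idom, ring_char_0} poly"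
  assumes "degree P < k"
  shows "(pderiv ^^ k) P = 0"
proof -
  obtain i where k: "k = Suc i" using assms by (cases k) auto
  then have "degree ((pderiv ^^ i) P) = 0" using assms by (simp add: degree_pderiv_funpow)
  then show ?thesis using k by (simp add: pderiv_eq_0_iff)
qed

lemma taylor_coeff_diff_poly:
  assumes "f holomorphic_on S" "open S" "0 \<in> S" "degree P < k"
  shows "taylor_coeff (\<lambda>z. f z - poly P z) k = taylor_coeff f k"
proof -
  have "(deriv ^^ k) (\<lambda>z. f z - poly P z) 0 = (deriv ^^ k) f 0 - (deriv ^^ k) (poly P) 0"
    by (rule higher_deriv_diff) (use assms in \<open>auto intro: holomorphic_intros\<close>)
  also have "(deriv ^^ k) (poly P) 0 = 0"
    using assms(4) by (simp add: higher_deriv_poly pderiv_funpow_eq_0)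
  finally show ?thesis by (simp add: taylor_coeff_def)
qed

lemma maximum_modulus_cball:
  assumes "g holomorphic_on S" "open S" "cball 0 R \<subseteq> S"
    and "\<And>u. u \<in> sphere 0 R \<Longrightarrow> norm (g u) \<le> B" "z \<in> cball 0 R"
  shows "norm (g z) \<le> B"
proof (rule maximum_modulus_frontier[of g "cball 0 R"])
  show "g holomorphic_on interior (cball 0 R)"
    using assms(1,3) ball_subset_cball by (metis holomorphic_on_subset interior_cball order_trans)
  show "continuous_on (closure (cball 0 R)) g"
    using assms(1,3) by (auto intro: holomorphic_on_imp_continuous_on holomorphic_on_subset)
qed (use assms in \<open>auto simp: frontier_cball\<close>)

lemma norm_le_max_mod:
  assumes "continuous_on (sphere 0 R) h" "u \<in> sphere 0 R"
  shows "norm (h u) \<le> max_mod R h"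
  unfolding max_mod_def
proof (rule cSup_upper)
  have "compact ((\<lambda>z. norm (h z)) ` sphere 0 R)"
    by (intro compact_continuous_image continuous_on_norm assms(1)) auto
  then show "bdd_above ((\<lambda>z. norm (h z)) ` sphere 0 R)"
    by (intro bounded_imp_bdd_above compact_imp_bounded)
qed (use assms(2) in auto)

lemma max_mod_le:
  assumes "0 \<le> R" "\<And>u. u \<in> sphere 0 R \<Longrightarrow> norm (h u) \<le> B"
  shows "max_mod R h \<le> B"
  unfolding max_mod_def
proof (rule cSup_least)
  have "complex_of_real R \<in> sphere 0 R" using assms(1) by simp
  then show "(\<lambda>z. norm (h z)) ` sphere 0 R \<noteq> {}" by blast
qed (use assms in auto)

lemma bernstein_walsh:
  fixes P :: "complex poly"
  assumes "degree P \<le> n" "0 < r" "r \<le> R"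
    and bound: "\<And>z. norm z \<le> r \<Longrightarrow> norm (poly P z) \<le> B" and "norm u \<le> R"
  shows "norm (poly P u) \<le> (R / r) ^ n * B"
proof -
  have "norm (poly P 0) \<le> B" using assms(2) by (intro bound) simp
  then have B: "0 \<le> B" by (rule order_trans[OF norm_ge_zero])
  show ?thesis
  proof (cases "norm u \<le> r")
    case True
    have "1 \<le> (R / r) ^ n" using assms(2,3) by (simp add: one_le_power)
    then have "B \<le> (R / r) ^ n * B" using B by (simp add: mult_le_cancel_right1)
    then show ?thesis using bound[OF True] by linarith
  next
    case False
    then have "u \<noteq> 0" using assms(2) by auto
    \<comment> \<open>The maximum principle for P at infinity, applied to its reversal Q.\<close>
    define Q where "Q = reflect_poly P * monom 1 (n - degree P)"
    have Q: "poly Q w = w ^ n * poly P (1 / w)" if "w \<noteq> 0" for w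
      using that assms(1) by (simp add: Q_def poly_reflect_poly_nz poly_monom power_add[symmetric]
          divide_inverse)
    have "norm (poly Q (1 / u)) \<le> B / r ^ n"
    proof (rule maximum_modulus_cball[of "poly Q" UNIV])
      fix w :: complex assume w: "w \<in> sphere 0 (1 / r)"
      then have "w \<noteq> 0" using assms(2) by auto
      with w have "norm (poly Q w) = norm (poly P (1 / w)) / r ^ n"
        by (simp add: Q norm_mult norm_power power_one_over)
      also have "\<dots> \<le> B / r ^ n"
        using w assms(2) by (intro divide_right_mono bound) (auto simp: norm_divide)
      finally show "norm (poly Q w) \<le> B / r ^ n" .
    qed (use False assms(2) in \<open>auto simp: norm_divide divide_le_eq intro: poly_holomorphic_on\<close>)
    moreover have "poly P u = u ^ n * poly Q (1 / u)"
      using \<open>u \<noteq> 0\<close> by (simp add: Q power_one_over)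
    ultimately have "norm (poly P u) \<le> norm u ^ n * (B / r ^ n)"
      by (metis mult_left_mono norm_ge_zero norm_mult norm_power zero_le_power)
    also have "\<dots> \<le> R ^ n * (B / r ^ n)"
      using assms B by (intro mult_right_mono power_mono) auto
    also have "\<dots> = (R / r) ^ n * B" by (simp add: power_divide)
    finally show ?thesis .
  qed
qed

lemma finite_zeros_in_cball:
  assumes "g holomorphic_on ball 0 Rb" "\<exists>z\<in>ball 0 Rb. g z \<noteq> 0" "r < Rb"
  shows "finite {z\<in>cball 0 r. g z = 0}"
proof (cases "g constant_on ball 0 Rb")
  case True
  then have "{z\<in>cball 0 r. g z = 0} = {}"
    using assms(2,3) by (force simp: constant_on_def)
  then show ?thesis by (metis finite.emptyI)
next
  case False
  show ?thesis
    by (rule holomorphic_compact_finite_zeros[OF assms(1) _ _ _ _ False]) (use assms(3) in auto)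
qed

lemma holomorphic_nonzero_in_smaller_ball:
  assumes "g holomorphic_on ball 0 s" "\<exists>z\<in>ball 0 s. g z \<noteq> 0" "0 < s'" "s' \<le> s"
  shows "\<exists>z\<in>ball 0 s'. g z \<noteq> 0"
proof (rule ccontr)
  assume zero: "\<not> ?thesis"
  have "g z = 0" if "z \<in> ball 0 s" for z
    by (rule analytic_continuation_open[of "ball 0 s'" "ball 0 s" g "\<lambda>_. 0"])
       (use assms zero that in auto)
  then show False using assms(2) by blast
qed

lemma holomorphic_factor_zero_global:
  assumes g: "g holomorphic_on S" "open S" "connected S" "w \<in> S" "\<exists>z\<in>S. g z \<noteq> 0"
  obtains h where "h holomorphic_on S" "h w \<noteq> 0"
    "\<And>z. z \<in> S \<Longrightarrow> g z = h z * (z - w) ^ nat (zorder g w)"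
proof -
  define k where "k = nat (zorder g w)"
  obtain e where e: "0 < e" "cball w e \<subseteq> S" "zor_poly g w holomorphic_on cball w e"
    and factor: "\<And>z. z \<in> cball w e \<Longrightarrow> g z = zor_poly g w z * (z - w) ^ k \<and> zor_poly g w z \<noteq> 0"
    using zorder_exist_zero[OF g] unfolding k_def by blast
  define h where "h z = (if z = w then zor_poly g w w else g z / (z - w) ^ k)" for z
  have h_near: "h z = zor_poly g w z" if "z \<in> cball w e" for z
    using factor[OF that] by (auto simp: h_def)
  have "h holomorphic_on (S - {w}) \<union> ball w e"
  proof (rule holomorphic_on_Un)
    show "h holomorphic_on S - {w}"
      by (rule holomorphic_transform[of "\<lambda>z. g z / (z - w) ^ k"])
         (auto simp: h_def intro!: holomorphic_intros holomorphic_on_subset[OF g(1)])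
    show "h holomorphic_on ball w e"
      by (rule holomorphic_transform[of "zor_poly g w"])
         (use e(3) h_near in \<open>auto intro: holomorphic_on_subset\<close>)
  qed (use g(2) in auto)
  moreover have "S = (S - {w}) \<union> ball w e" using e g(4) by auto
  ultimately have "h holomorphic_on S" by simp
  moreover have "h w \<noteq> 0" using factor[of w] e(1) by (simp add: h_def)
  moreover have "g z = h z * (z - w) ^ k" if "z \<in> S" for z
    using factor[of w] e(1) by (cases "z = w") (auto simp: h_def k_def)
  ultimately show ?thesis using that unfolding k_def by blast
qed

lemma zero_count_mult:
  assumes g: "g holomorphic_on S" "open S" "connected S" "\<exists>z\<in>S. g z \<noteq> 0"
    and T: "T \<subseteq> S" "finite {z\<in>T. g z = 0}" "w \<in> T" "g w = 0"
    and "g1 holomorphic_on S" "g1 w \<noteq> 0" "\<phi> holomorphic_on S" "\<And>z. z \<in> S \<Longrightarrow> z \<noteq> w \<Longrightarrow> \<phi> z \<noteq> 0"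
    and eq: "\<And>z. z \<in> S \<Longrightarrow> g z = g1 z * \<phi> z"
  shows "{z\<in>T. g1 z = 0} = {z\<in>T. g z = 0} - {w}"
    and "zero_count g T = nat (zorder g w) + zero_count g1 T"
proof -
  show zeros: "{z\<in>T. g1 z = 0} = {z\<in>T. g z = 0} - {w}"
    using T assms(10,12) eq by auto
  have "zorder g z = zorder g1 z" if "z \<in> T" "z \<noteq> w" for z
  proof -
    have z: "z \<in> S" using that T by auto
    have "zorder g z = zorder (\<lambda>u. g1 u * \<phi> u) z"
      by (rule zorder_cong) (use eventually_at_in_open'[OF g(2) z] eq in \<open>auto elim: eventually_mono\<close>)
    also have "\<dots> = zorder g1 z + zorder \<phi> z"
    proof (rule zorder_times_analytic)
      obtain \<beta> where "\<beta> \<in> S" "g \<beta> \<noteq> 0" using g(4) by blast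
      then have "\<forall>\<^sub>F u in at z. g u \<noteq> 0 \<and> u \<in> S"
        using non_zero_neighbour_alt[OF g(1-3) z] by blast
      then show "\<forall>\<^sub>F u in at z. g1 u * \<phi> u \<noteq> 0"
        by (rule eventually_mono) (metis eq)
    qed (use assms z in \<open>auto intro: holomorphic_on_imp_analytic_at\<close>)
    also have "zorder \<phi> z = 0"
      using assms z that by (intro zorder_eq_0I holomorphic_on_imp_analytic_at) auto
    finally show ?thesis by simp
  qed
  then have "(\<Sum>z\<in>{z\<in>T. g z = 0} - {w}. nat (zorder g z)) = zero_count g1 T"
    unfolding zero_count_def zeros by (intro sum.cong) auto
  moreover have "zero_count g T = nat (zorder g w) + (\<Sum>z\<in>{z\<in>T. g z = 0} - {w}. nat (zorder g z))"
    unfolding zero_count_def using T by (intro sum.remove) auto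
  ultimately show "zero_count g T = nat (zorder g w) + zero_count g1 T" by simp
qed

definition blaschke :: "real \<Rightarrow> complex \<Rightarrow> complex \<Rightarrow> complex" where
  "blaschke R w z = of_real R * (z - w) / (of_real (R\<^sup>2) - cnj w * z)"

lemma blaschke_denominator_nonzero:
  assumes "norm w * norm z < R\<^sup>2"
  shows "of_real (R\<^sup>2) - cnj w * z \<noteq> 0"
proof
  assume "of_real (R\<^sup>2) - cnj w * z = 0"
  then have "norm (cnj w * z) = R\<^sup>2" by (metis eq_iff_diff_eq_0 norm_of_real abs_power2 power2_abs)
  then show False using assms by (simp add: norm_mult)
qed

lemma blaschke_eq_0_iff:
  assumes "norm w * norm z < R\<^sup>2" "R \<noteq> 0"
  shows "blaschke R w z = 0 \<longleftrightarrow> z = w"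
  using blaschke_denominator_nonzero[OF assms(1)] assms(2) by (simp add: blaschke_def)

lemma norm_blaschke_on_sphere:
  assumes "norm z = R" "norm w < R"
  shows "norm (blaschke R w z) = 1"
proof -
  have "of_real (R\<^sup>2) = z * cnj z" using assms(1) complex_norm_square[of z] by simp
  then have "of_real (R\<^sup>2) - cnj w * z = z * cnj (z - w)" by (simp add: algebra_simps)
  then have "norm (of_real (R\<^sup>2) - cnj w * z) = R * norm (z - w)"
    using assms(1) by (metis complex_mod_cnj norm_mult)
  moreover have "z \<noteq> w" "0 < R" using assms by auto
  ultimately show ?thesis by (simp add: blaschke_def norm_divide norm_mult)
qed

lemma norm_blaschke_le:
  assumes "norm w \<le> r" "norm z \<le> s" "0 \<le> R" "r * s < R\<^sup>2"
  shows "norm (blaschke R w z) \<le> R * (r + s) / (R\<^sup>2 - r * s)"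
proof -
  have rs: "0 \<le> r" "0 \<le> s" using assms(1,2) by (meson norm_ge_zero order_trans)+
  have "norm w * norm z \<le> r * s" using assms rs by (intro mult_mono) auto
  then have "R\<^sup>2 - r * s \<le> norm (of_real (R\<^sup>2) - cnj w * z)"
    using norm_triangle_ineq2[of "of_real (R\<^sup>2)" "cnj w * z"] by (simp add: norm_mult norm_power)
  moreover have "R * norm (z - w) \<le> R * (r + s)"
    using assms norm_triangle_ineq4[of z w] by (intro mult_left_mono) auto
  ultimately show ?thesis
    using assms rs by (auto simp: blaschke_def norm_divide norm_mult intro!: frac_le)
qed

lemma blaschke_uniform_contraction:
  assumes "0 \<le> r" "r < \<rho>" "\<rho> \<le> 1"
  obtains s c where "0 < s" "s < \<rho>" "0 < c" "c < 1"
    "\<And>R w z. \<rho> \<le> R \<Longrightarrow> norm w \<le> r \<Longrightarrow> norm z \<le> s \<Longrightarrow> max R 1 * norm (blaschke R w z) \<le> c"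
proof
  \<comment> \<open>c < 1 amounts to s (\<rho> + r) < \<rho> (\<rho> - r).\<close>
  define s where "s = (\<rho> - r) / 4"
  define c where "c = \<rho> * (r + s) / (\<rho>\<^sup>2 - r * s)"
  show s: "0 < s" "s < \<rho>" using assms by (auto simp: s_def)
  have rs: "r * s < \<rho>\<^sup>2"
    using assms s unfolding power2_eq_square by (intro mult_less_le_imp_less) auto
  show "0 < c" using assms s rs by (simp add: c_def)
  show "c < 1"
  proof -
    have "0 < (\<rho> - r) * (3 * \<rho> - r)" using assms by (intro mult_pos_pos) auto
    then have "s * (\<rho> + r) < \<rho> * (\<rho> - r)" by (simp add: s_def field_simps algebra_simps)
    then have "\<rho> * (r + s) < \<rho>\<^sup>2 - r * s" by (simp add: power2_eq_square algebra_simps)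
    then show ?thesis using rs by (simp add: c_def divide_less_eq)
  qed
  fix R :: real and w z :: complex
  assume R: "\<rho> \<le> R" and wz: "norm w \<le> r" "norm z \<le> s"
  have den: "0 < R\<^sup>2 - r * s"
    using rs R assms power_mono[OF R, of 2] by linarith
  have "R * (\<rho>\<^sup>2 - r * s) \<le> \<rho> * (R\<^sup>2 - r * s)"
  proof -
    have "0 \<le> (R - \<rho>) * (R * \<rho> + r * s)" using R assms s by (intro mult_nonneg_nonneg) auto
    then show ?thesis by (simp add: power2_eq_square algebra_simps)
  qed
  then have "R / (R\<^sup>2 - r * s) \<le> \<rho> / (\<rho>\<^sup>2 - r * s)" using den rs by (simp add: field_simps)
  from mult_left_mono[OF this, of "r + s"]
  have bound1: "R * (r + s) / (R\<^sup>2 - r * s) \<le> c" using assms s by (simp add: c_def mult.commute)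
  have "\<rho>\<^sup>2 * (r * s) \<le> R\<^sup>2 * (r * s)" using assms s R by (intro mult_right_mono power_mono) auto
  then have "R\<^sup>2 * (\<rho>\<^sup>2 - r * s) \<le> \<rho>\<^sup>2 * (R\<^sup>2 - r * s)" by (simp add: algebra_simps)
  then have "R\<^sup>2 / (R\<^sup>2 - r * s) \<le> \<rho>\<^sup>2 / (\<rho>\<^sup>2 - r * s)" using den rs by (simp add: field_simps)
  from mult_left_mono[OF this, of "r + s"]
  have "R * (R * (r + s) / (R\<^sup>2 - r * s)) \<le> \<rho> * c"
    using assms s by (simp add: c_def power2_eq_square mult.commute mult.left_commute)
  also have "\<dots> \<le> c"
    using assms rs s by (intro mult_left_le_one_le) (auto simp: c_def)
  finally have bound2: "R * (R * (r + s) / (R\<^sup>2 - r * s)) \<le> c" .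
  have "norm (blaschke R w z) \<le> R * (r + s) / (R\<^sup>2 - r * s)"
    using wz R assms den by (intro norm_blaschke_le) auto
  then show "max R 1 * norm (blaschke R w z) \<le> c"
    using bound1 bound2 R assms by (cases "R \<le> 1") (auto simp: max_def intro: order_trans[OF mult_left_mono])
qed

lemma blaschke_factor_zero:
  assumes g: "g holomorphic_on ball 0 Rb" "\<exists>z\<in>ball 0 Rb. g z \<noteq> 0"
    and w: "w \<in> ball 0 Rb" "\<And>z::complex. z \<in> ball 0 Rb \<Longrightarrow> norm w * norm z < R\<^sup>2" and "0 < R"
  obtains g1 where "g1 holomorphic_on ball 0 Rb" "g1 w \<noteq> 0"
    "\<And>z. z \<in> ball 0 Rb \<Longrightarrow> g z = g1 z * blaschke R w z ^ nat (zorder g w)"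
proof -
  define k where "k = nat (zorder g w)"
  define D where "D z = of_real (R\<^sup>2) - cnj w * z" for z
  have D: "D z \<noteq> 0" if "z \<in> ball 0 Rb" for z
    unfolding D_def by (rule blaschke_denominator_nonzero) (rule w(2)[OF that])
  obtain h where h: "h holomorphic_on ball 0 Rb" "h w \<noteq> 0"
    and gh: "\<And>z. z \<in> ball 0 Rb \<Longrightarrow> g z = h z * (z - w) ^ k"
    using holomorphic_factor_zero_global[OF g(1) _ _ w(1) g(2)] unfolding k_def by auto
  show ?thesis
  proof
    show "(\<lambda>z. h z * (D z / of_real R) ^ k) holomorphic_on ball 0 Rb"
      unfolding D_def by (intro holomorphic_intros h(1)) (use \<open>0 < R\<close> in auto)
    show "h w * (D w / of_real R) ^ k \<noteq> 0" using h(2) D[OF w(1)] \<open>0 < R\<close> by simp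
  next
    fix z :: complex assume z: "z \<in> ball 0 Rb"
    have "blaschke R w z = of_real R * (z - w) / D z" by (simp add: blaschke_def D_def)
    then show "g z = h z * (D z / of_real R) ^ k * blaschke R w z ^ nat (zorder g w)"
      using gh[OF z] D[OF z] \<open>0 < R\<close> by (simp add: k_def power_divide power_mult_distrib)
  qed
qed

lemma blaschke_divide_zero:
  assumes g: "g holomorphic_on ball 0 Rb" "\<exists>z\<in>ball 0 Rb. g z \<noteq> 0"
    and radii: "0 < r" "r < R" "R < Rb" "r * Rb \<le> R\<^sup>2"
    and w: "w \<in> cball 0 r" "g w = 0"
  obtains g1 where "g1 holomorphic_on ball 0 Rb" "g1 w \<noteq> 0"
    "{z\<in>cball 0 r. g1 z = 0} = {z\<in>cball 0 r. g z = 0} - {w}"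
    "zero_count g (cball 0 r) = nat (zorder g w) + zero_count g1 (cball 0 r)"
    "\<And>z. z \<in> ball 0 Rb \<Longrightarrow> g z = g1 z * blaschke R w z ^ nat (zorder g w)"
proof -
  have small: "norm w * norm u < R\<^sup>2" if "u \<in> ball 0 Rb" for u
  proof -
    have "norm w * norm u \<le> r * norm u" using w by (intro mult_right_mono) auto
    also have "\<dots> < r * Rb" using that radii by (intro mult_strict_left_mono) auto
    finally show ?thesis using radii by linarith
  qed
  obtain g1 where g1: "g1 holomorphic_on ball 0 Rb" "g1 w \<noteq> 0"
    and factor: "\<And>z. z \<in> ball 0 Rb \<Longrightarrow> g z = g1 z * blaschke R w z ^ nat (zorder g w)"
    using blaschke_factor_zero[OF g _ small] w radii by auto
  have nonzero: "blaschke R w u ^ nat (zorder g w) \<noteq> 0" if "u \<in> ball 0 Rb" "u \<noteq> w" for u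
    using blaschke_eq_0_iff[OF small[OF that(1)]] that radii by simp
  have hol: "(\<lambda>u. blaschke R w u ^ nat (zorder g w)) holomorphic_on ball 0 Rb"
    unfolding blaschke_def using blaschke_denominator_nonzero[OF small]
    by (intro holomorphic_intros) auto
  have fin: "finite {z\<in>cball 0 r. g z = 0}" using finite_zeros_in_cball[OF g] radii by simp
  have sub: "cball 0 r \<subseteq> ball 0 Rb" using radii by auto
  show ?thesis
    by (rule that[OF g1 zero_count_mult[OF g(1) open_ball connected_ball g(2) sub fin w g1 hol nonzero
          factor] factor])
qed

lemma blaschke_bound:
  assumes "g holomorphic_on ball 0 Rb" "\<exists>z\<in>ball 0 Rb. g z \<noteq> 0"
    and radii: "0 < r" "r < R" "R < Rb" "r * Rb \<le> R\<^sup>2"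
    and z: "norm z \<le> R" and q: "\<And>w. norm w \<le> r \<Longrightarrow> norm (blaschke R w z) \<le> q"
    and B: "\<And>u. u \<in> sphere 0 R \<Longrightarrow> norm (g u) \<le> B"
  shows "norm (g z) \<le> q ^ zero_count g (cball 0 r) * B"
proof -
  have "norm (blaschke R 0 z) \<le> q" using radii by (intro q) auto
  then have "0 \<le> q" by (rule order_trans[OF norm_ge_zero])
  have "norm (g (of_real R)) \<le> B" using B radii by simp
  then have "0 \<le> B" by (rule order_trans[OF norm_ge_zero])
  define m where "m = card {w\<in>cball 0 r. g w = 0}"
  from m_def assms(1,2) B show ?thesis
  proof (induction m arbitrary: g)
    case 0
    then have "{w\<in>cball 0 r. g w = 0} = {}"
      using finite_zeros_in_cball[of g Rb r] radii by auto
    then have "zero_count g (cball 0 r) = 0" unfolding zero_count_def by (metis sum.empty)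
    moreover have "norm (g z) \<le> B"
      by (rule maximum_modulus_cball[of g "ball 0 Rb"]) (use 0 radii z in auto)
    ultimately show ?case by simp
  next
    case (Suc m)
    have "{w\<in>cball 0 r. g w = 0} \<noteq> {}" using Suc.prems(1) by (metis card.empty nat.distinct(1))
    then obtain w where w: "w \<in> cball 0 r" "g w = 0" by blast
    define k where "k = nat (zorder g w)"
    obtain g1 where g1: "g1 holomorphic_on ball 0 Rb" "g1 w \<noteq> 0"
      and zeros: "{u\<in>cball 0 r. g1 u = 0} = {u\<in>cball 0 r. g u = 0} - {w}"
      and count: "zero_count g (cball 0 r) = k + zero_count g1 (cball 0 r)"
      and factor: "\<And>u. u \<in> ball 0 Rb \<Longrightarrow> g u = g1 u * blaschke R w u ^ k"
      using blaschke_divide_zero[OF Suc.prems(2,3) radii w] unfolding k_def by blast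
    have "norm (g1 z) \<le> q ^ zero_count g1 (cball 0 r) * B"
    proof (rule Suc.IH[OF _ g1(1)])
      show "m = card {u\<in>cball 0 r. g1 u = 0}"
        using Suc.prems(1) finite_zeros_in_cball[OF Suc.prems(2,3)] w radii unfolding zeros by auto
      show "\<exists>u\<in>ball 0 Rb. g1 u \<noteq> 0" using g1(2) w radii by auto
      fix u :: complex assume u: "u \<in> sphere 0 R"
      then have "norm (g u) = norm (g1 u)"
        using factor[of u] norm_blaschke_on_sphere[of u R w] w radii by (auto simp: norm_mult norm_power)
      then show "norm (g1 u) \<le> B" using Suc.prems(4)[OF u] by simp
    qed
    moreover have "norm (blaschke R w z ^ k) \<le> q ^ k"
      using q[of w] w by (simp add: norm_power power_mono)
    ultimately have "norm (g1 z) * norm (blaschke R w z ^ k) \<le> q ^ zero_count g1 (cball 0 r) * B * q ^ k"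
      using \<open>0 \<le> q\<close> \<open>0 \<le> B\<close> by (intro mult_mono) auto
    then show ?case using factor[of z] z radii count by (simp add: norm_mult power_add algebra_simps)
  qed
qed

lemma max_mod_nonneg:
  assumes "continuous_on (sphere 0 R) h" "0 \<le> R"
  shows "0 \<le> max_mod R h"
  using norm_le_max_mod[OF assms(1), of "of_real R"] assms(2) by (simp add: order_trans[OF norm_ge_zero])

lemma norm_taylor_coeff_le:
  assumes "g holomorphic_on S" "open S" "cball 0 s \<subseteq> S" "0 < s"
    and "\<And>u. u \<in> sphere 0 s \<Longrightarrow> norm (g u) \<le> B"
  shows "norm (taylor_coeff g k) \<le> B / s ^ k"
proof -
  have "norm ((deriv ^^ k) g 0) \<le> fact k * B / s ^ k"
  proof (rule Cauchy_inequality)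
    show "g holomorphic_on ball 0 s"
      using assms(1,3) ball_subset_cball by (metis holomorphic_on_subset order_trans)
    show "continuous_on (cball 0 s) g"
      using assms(1,3) by (meson holomorphic_on_imp_continuous_on holomorphic_on_subset)
  qed (use assms(4,5) in \<open>auto simp: dist_norm norm_minus_commute\<close>)
  then show ?thesis by (simp add: taylor_coeff_def norm_divide field_simps)
qed

lemma max_mod_diff_poly_le:
  fixes P :: "complex poly"
  assumes f: "f holomorphic_on S" "open S" "cball 0 R \<subseteq> S"
    and "degree P \<le> n" "0 < s" "s \<le> R"
    and close: "\<And>z. norm z \<le> s \<Longrightarrow> norm (f z - poly P z) \<le> \<epsilon>"
  shows "max_mod R (\<lambda>z. f z - poly P z) \<le> (1 + (R / s) ^ n) * max_mod R f + (R / s) ^ n * \<epsilon>"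
proof (rule max_mod_le)
  have "continuous_on (sphere 0 R) f"
    using f sphere_cball by (meson holomorphic_on_imp_continuous_on holomorphic_on_subset order_trans)
  then have Mf: "norm (f u) \<le> max_mod R f" if "u \<in> sphere 0 R" for u
    using norm_le_max_mod that by blast
  have P_small: "norm (poly P z) \<le> max_mod R f + \<epsilon>" if "norm z \<le> s" for z
  proof -
    have "norm (f z) \<le> max_mod R f"
      using that assms(6) by (intro maximum_modulus_cball[OF f Mf]) auto
    then show ?thesis
      using close[OF that] norm_triangle_ineq4[of "f z" "f z - poly P z"] by simp
  qed
  fix u :: complex assume u: "u \<in> sphere 0 R"
  have "norm (poly P u) \<le> (R / s) ^ n * (max_mod R f + \<epsilon>)"
    using u by (intro bernstein_walsh[OF assms(4-6) P_small]) auto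
  then show "norm (f u - poly P u) \<le> (1 + (R / s) ^ n) * max_mod R f + (R / s) ^ n * \<epsilon>"
    using Mf[OF u] norm_triangle_ineq4[of "f u" "poly P u"] by (simp add: algebra_simps)
qed (use assms in auto)

lemma contraction_power_bounds:
  fixes q R s t :: real
  assumes "0 \<le> q" "max R 1 * q \<le> t ^ 4" "0 < t" "0 < R" "0 < s" "s \<le> 1"
    and t: "t ^ N \<le> s ^ (n + k)" "t ^ N \<le> 1/4" and "2 * n + 1 \<le> N"
  shows "(R / s) ^ n * q ^ N \<le> 1/4"
    and "4 * (R / s) ^ n * q ^ N / s ^ k \<le> (t\<^sup>2) ^ N / max R 1 ^ (n + 1)"
proof -
  define R' where "R' = max R 1"
  have R': "1 \<le> R'" "R \<le> R'" by (auto simp: R'_def)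
  have tN: "0 < t ^ N" using assms(3) by simp
  have pow: "R' ^ m * q ^ N \<le> (t ^ N) ^ 4" if "m \<le> N" for m
  proof -
    have "R' ^ m * q ^ N \<le> R' ^ N * q ^ N"
      using R' that assms(1) by (intro mult_right_mono power_increasing) auto
    also have "\<dots> = (R' * q) ^ N" by (simp add: power_mult_distrib)
    also have "\<dots> \<le> (t ^ 4) ^ N"
      using assms(1,2) R' by (intro power_mono) (auto simp: R'_def)
    finally show ?thesis by (simp flip: power_mult add: mult.commute)
  qed
  have "R ^ n * q ^ N \<le> R' ^ n * q ^ N"
    using R' assms(1,4) by (intro mult_right_mono power_mono) auto
  also have "\<dots> \<le> (t ^ N) ^ 4" using pow assms(9) by simp
  finally have Rn: "R ^ n * q ^ N \<le> (t ^ N) ^ 4" .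
  have sn: "t ^ N \<le> s ^ n"
    using t(1) power_decreasing[of n "n + k" s] assms(5,6) by simp
  have "(R / s) ^ n * q ^ N = R ^ n * q ^ N / s ^ n" by (simp add: power_divide)
  also have "\<dots> \<le> (t ^ N) ^ 4 / t ^ N"
    using Rn sn tN by (intro frac_le) auto
  also have "\<dots> = (t ^ N) ^ 3" using tN by (simp add: power_Suc eval_nat_numeral)
  also have "\<dots> \<le> (1 / 4) ^ 3" using t(2) tN by (intro power_mono) auto
  also have "\<dots> \<le> 1 / 4" by (simp add: power3_eq_cube)
  finally show "(R / s) ^ n * q ^ N \<le> 1/4" .
  have "R ^ n * R' ^ (n + 1) * q ^ N \<le> R' ^ (2 * n + 1) * q ^ N"
    using R' assms(1,4) by (intro mult_right_mono) (auto simp: power_add mult_2 intro!: mult_right_mono power_mono)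
  also have "\<dots> \<le> (t ^ N) ^ 4" using pow assms(9) by blast
  also have "\<dots> = t ^ N * t ^ N * (t\<^sup>2) ^ N" by (simp add: power_mult_distrib eval_nat_numeral flip: power_mult)
  also have "\<dots> \<le> (1/4) * s ^ (n + k) * (t\<^sup>2) ^ N"
    using t tN by (intro mult_mono) auto
  finally have "4 * R ^ n * q ^ N * R' ^ (n + 1) \<le> (t\<^sup>2) ^ N * s ^ (n + k)" by (simp add: algebra_simps)
  moreover have "4 * (R / s) ^ n * q ^ N / s ^ k = 4 * R ^ n * q ^ N / s ^ (n + k)"
    by (simp add: power_divide power_add)
  ultimately show "4 * (R / s) ^ n * q ^ N / s ^ k \<le> (t\<^sup>2) ^ N / max R 1 ^ (n + 1)"
    using assms(5) R' by (simp add: R'_def[symmetric] divide_le_eq le_divide_eq mult.commute)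
qed

lemma ball_superset_in_open:
  fixes S :: "complex set"
  assumes "open S" "cball 0 R \<subseteq> S" "0 < R" "R < M"
  obtains R' where "R < R'" "R' \<le> M" "ball 0 R' \<subseteq> S"
proof -
  obtain e where e: "0 < e" "(\<Union>x\<in>cball 0 R. ball x e) \<subseteq> S"
    using compact_subset_open_imp_ball_epsilon_subset[OF compact_cball assms(1,2)] by blast
  have "y \<in> S" if y: "norm y < R + e" for y
  proof (cases "norm y \<le> R")
    case True
    then have "y \<in> cball 0 R" "y \<in> ball y e" using e(1) by auto
    then show ?thesis using e(2) by blast
  next
    case False
    then have y: "0 < norm y" using assms(3) by linarith
    define x where "x = (R / norm y) *\<^sub>R y"
    have "norm x = R" using y assms(3) by (simp add: x_def)
    moreover have "dist x y = norm y - R"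
    proof -
      have "y - x = (1 - R / norm y) *\<^sub>R y" by (simp add: x_def algebra_simps)
      then have "norm (y - x) = \<bar>1 - R / norm y\<bar> * norm y" by simp
      also have "\<dots> = norm y - R" using y False by (simp add: field_simps abs_if)
      finally show ?thesis by (simp add: dist_norm norm_minus_commute)
    qed
    ultimately have "x \<in> cball 0 R" "y \<in> ball x e" using y that by auto
    then show ?thesis using e(2) by blast
  qed
  then have "ball 0 (min (R + e) M) \<subseteq> S" by auto
  with e(1) assms(4) show ?thesis by (intro that[of "min (R + e) M"]) auto
qed

lemma power_bounds_of_large_exponent:
  fixes s t :: real
  assumes t: "0 < t" "t ^ j \<le> s" "t ^ m \<le> 1/4" "0 < j" and "n < k"
    and N: "max 2 (real m) * (real n + 1) \<le> real N" "real k \<le> 1 / (2 * real j) * real N"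
  shows "t ^ N \<le> s ^ (n + k)" "t ^ N \<le> 1/4" "2 * n + 1 \<le> N"
proof -
  have "t < 1"
  proof (rule ccontr)
    assume "\<not> t < 1"
    then have "1 \<le> t ^ m" by (simp add: one_le_power)
    then show False using t(3) by simp
  qed
  have "2 * (real n + 1) \<le> max 2 (real m) * (real n + 1)"
    and "real m * 1 \<le> max 2 (real m) * (real n + 1)"
    by (intro mult_right_mono mult_mono; simp)+
  then have "real (2 * n + 1) \<le> real N" "real m \<le> real N" using N(1) by simp_all
  then have "2 * n + 1 \<le> N" "m \<le> N" by (simp_all only: of_nat_le_iff)
  then show "2 * n + 1 \<le> N" by simp
  have "real (j * (2 * k)) \<le> real N" using N(2) t(4) by (simp add: field_simps)
  then have "j * (n + k) \<le> N"
    using \<open>n < k\<close> by (metis of_nat_le_iff mult_le_mono2 mult_2 add_le_mono1 less_imp_le order_trans)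
  then have "t ^ N \<le> (t ^ j) ^ (n + k)"
    using t(1) \<open>t < 1\<close> by (simp add: power_decreasing flip: power_mult)
  also have "\<dots> \<le> s ^ (n + k)" using t by (intro power_mono) auto
  finally show "t ^ N \<le> s ^ (n + k)" .
  have "t ^ N \<le> t ^ m" using t(1) \<open>t < 1\<close> \<open>m \<le> N\<close> by (intro power_decreasing) auto
  then show "t ^ N \<le> 1/4" using t(3) by simp
qed

lemma taylor_coeff_le_zero_count:
  fixes f :: "complex \<Rightarrow> complex" and P :: "complex poly" and r :: real
  defines "N \<equiv> zero_count (\<lambda>z. f z - poly P z) (cball 0 r)"
  assumes f: "f holomorphic_on ball 0 Rb" "\<exists>z\<in>ball 0 Rb. f z \<noteq> poly P z"
    and radii: "0 < r" "r < R" "R < Rb" "r * Rb \<le> R\<^sup>2" "0 < s" "s \<le> R"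
    and q: "\<And>w z. norm w \<le> r \<Longrightarrow> norm z \<le> s \<Longrightarrow> norm (blaschke R w z) \<le> q"
    and P: "degree P \<le> n" "n < k"
    and small: "(R / s) ^ n * q ^ N \<le> 1/4"
  shows "norm (taylor_coeff f k) \<le> 4 * (R / s) ^ n * q ^ N * max_mod R f / s ^ k"
proof -
  define g where "g = (\<lambda>z. f z - poly P z)"
  define X where "X = (R / s) ^ n"
  define Mf where "Mf = max_mod R f"
  define Mg where "Mg = max_mod R g"
  have hol: "g holomorphic_on ball 0 Rb" unfolding g_def by (intro holomorphic_intros f(1))
  have sub: "cball 0 R \<subseteq> ball 0 Rb" using radii by auto
  have cont: "continuous_on (sphere 0 R) h" if "h holomorphic_on ball 0 Rb" for h
    using that sub sphere_cball by (meson holomorphic_on_imp_continuous_on holomorphic_on_subset order_trans)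
  have "0 \<le> Mf" "0 \<le> Mg"
    unfolding Mf_def Mg_def using max_mod_nonneg cont f(1) hol radii by auto
  have "norm (blaschke R 0 0) \<le> q" using radii by (intro q) auto
  then have "0 \<le> q" by (rule order_trans[OF norm_ge_zero])
  have N: "N = zero_count g (cball 0 r)" by (simp add: N_def g_def)
  have g_small: "norm (g z) \<le> q ^ N * Mg" if "norm z \<le> s" for z
    unfolding N Mg_def
  proof (rule blaschke_bound[OF hol _ radii(1-4)])
    show "\<exists>z\<in>ball 0 Rb. g z \<noteq> 0" using f(2) by (simp add: g_def)
    show "norm (blaschke R w z) \<le> q" if "norm w \<le> r" for w using q that \<open>norm z \<le> s\<close> by blast
    show "norm (g u) \<le> max_mod R g" if "u \<in> sphere 0 R" for u using norm_le_max_mod cont hol that by blast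
  qed (use that radii in auto)
  have "Mg \<le> (1 + X) * Mf + X * (q ^ N * Mg)"
    unfolding Mg_def Mf_def X_def g_def
    by (rule max_mod_diff_poly_le[OF f(1) open_ball sub P(1) radii(5,6)]) (use g_small in \<open>simp add: g_def Mg_def\<close>)
  moreover have "X * (q ^ N * Mg) \<le> Mg / 4"
    using mult_right_mono[OF small \<open>0 \<le> Mg\<close>] by (simp add: X_def mult.assoc)
  moreover have "1 \<le> X" using radii by (simp add: X_def one_le_power)
  then have "(1 + X) * Mf \<le> 2 * (X * Mf)" using mult_right_mono[OF \<open>1 \<le> X\<close> \<open>0 \<le> Mf\<close>] by (simp add: algebra_simps)
  moreover have "0 \<le> X * Mf" using \<open>1 \<le> X\<close> \<open>0 \<le> Mf\<close> by simp
  ultimately have Mg_le: "Mg \<le> 4 * (X * Mf)" by linarith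
  have "taylor_coeff f k = taylor_coeff g k"
    unfolding g_def using f(1) radii P by (intro taylor_coeff_diff_poly[symmetric]) auto
  then have "norm (taylor_coeff f k) = norm (taylor_coeff g k)" by simp
  also have "norm (taylor_coeff g k) \<le> q ^ N * Mg / s ^ k"
    by (rule norm_taylor_coeff_le[OF hol open_ball _ radii(5)]) (use g_small radii in auto)
  also have "\<dots> \<le> q ^ N * (4 * (X * Mf)) / s ^ k"
    using Mg_le \<open>0 \<le> q\<close> radii(5) by (intro divide_right_mono mult_left_mono) auto
  finally show ?thesis by (simp add: X_def Mf_def mult_ac)
qed

lemma taylor_coeff_le_of_many_zeros:
  fixes f :: "complex \<Rightarrow> complex" and P :: "complex poly"
  assumes r: "0 < r" "r < 1"
    and s: "0 < s" "s < (r + 2) / 3"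
    and contraction: "\<And>R w z. (r + 2) / 3 \<le> R \<Longrightarrow> norm w \<le> r \<Longrightarrow> norm z \<le> s \<Longrightarrow>
      max R 1 * norm (blaschke R w z) \<le> t ^ 4"
    and t: "0 < t" "t ^ j \<le> s" "t ^ m \<le> 1/4" "0 < j"
    and f: "f holomorphic_on ball 0 1" "\<exists>z\<in>ball 0 1. f z \<noteq> poly P z" "degree P \<le> n" "n < k"
    and N: "N = zero_count (\<lambda>z. f z - poly P z) (cball 0 r)"
      "max 2 (real m) * (real n + 1) \<le> real N" "real k \<le> 1 / (2 * real j) * real N"
    and R: "(r + 2) / 3 \<le> R" "open S" "cball 0 R \<subseteq> S" "f holomorphic_on S"
  shows "norm (taylor_coeff f k) \<le> max_mod R f / max R 1 ^ (n + 1) * (t\<^sup>2) ^ N"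
proof -
  have "0 < R" "r < R" "s \<le> R" using r s R(1) by auto
  moreover have "R < R\<^sup>2 / r" using r \<open>r < R\<close> by (simp add: less_divide_eq power2_eq_square)
  \<comment> \<open>The Blaschke factors of zeros in cball 0 r have no poles in ball 0 (R^2/r).\<close>
  ultimately obtain Rb where Rb: "R < Rb" "Rb \<le> R\<^sup>2 / r" "ball 0 Rb \<subseteq> S"
    using ball_superset_in_open[OF R(2,3)] by blast
  have "r * Rb \<le> R\<^sup>2" using Rb(2) r by (simp add: le_divide_eq mult.commute)
  have hol: "f holomorphic_on ball 0 Rb" using R(4) Rb(3) by (rule holomorphic_on_subset)
  have "\<exists>z\<in>ball 0 (min 1 Rb). f z - poly P z \<noteq> 0"
    by (rule holomorphic_nonzero_in_smaller_ball[of _ 1]) (use f Rb \<open>0 < R\<close> in \<open>auto intro!: holomorphic_intros\<close>)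
  then have nonzero: "\<exists>z\<in>ball 0 Rb. f z \<noteq> poly P z" by auto
  define q where "q = t ^ 4 / max R 1"
  have q: "norm (blaschke R w z) \<le> q" if "norm w \<le> r" "norm z \<le> s" for w z
    using contraction[OF R(1) that] by (simp add: q_def le_divide_eq less_max_iff_disj mult.commute)
  have "0 \<le> q" "max R 1 * q \<le> t ^ 4" by (simp_all add: q_def)
  note exponents = power_bounds_of_large_exponent[OF t f(4) N(2,3)]
  note factor = contraction_power_bounds[OF \<open>0 \<le> q\<close> \<open>max R 1 * q \<le> t ^ 4\<close> t(1) \<open>0 < R\<close> s(1) _ exponents]
  have "0 \<le> max_mod R f"
  proof (rule max_mod_nonneg)
    show "continuous_on (sphere 0 R) f"
      using R(3,4) sphere_cball by (meson holomorphic_on_imp_continuous_on holomorphic_on_subset order_trans)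
  qed (use \<open>0 < R\<close> in simp)
  have "norm (taylor_coeff f k) \<le> 4 * (R / s) ^ n * q ^ N * max_mod R f / s ^ k"
    using taylor_coeff_le_zero_count[OF hol nonzero r(1) \<open>r < R\<close> Rb(1) \<open>r * Rb \<le> R\<^sup>2\<close> s(1)
        \<open>s \<le> R\<close> q f(3,4)] factor(1) N(1) r s by auto
  also have "\<dots> = max_mod R f * (4 * (R / s) ^ n * q ^ N / s ^ k)" by simp
  also have "\<dots> \<le> max_mod R f * ((t\<^sup>2) ^ N / max R 1 ^ (n + 1))"
    using factor(2) r s \<open>0 \<le> max_mod R f\<close> by (intro mult_left_mono) auto
  finally show ?thesis by simp
qed

theorem lemma2p2:
  fixes r :: real
  assumes "0 < r" "r < 1"
  shows "\<exists>A a \<delta>. A \<ge> 1 \<and> 0 < a \<and> a < 1 \<and> \<delta> > 0 \<and>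
    (\<forall>(f :: complex \<Rightarrow> complex) (P :: complex poly) (n :: nat) (N :: nat) (k :: nat) (R :: real).
       f holomorphic_on ball 0 1 \<longrightarrow>
       (\<exists>z\<in>ball 0 1. f z \<noteq> poly P z) \<longrightarrow>
       degree P \<le> n \<longrightarrow>
       N = zero_count (\<lambda>z. f z - poly P z) (cball 0 r) \<longrightarrow>
       real N \<ge> A * (real n + 1) \<longrightarrow>
       n < k \<longrightarrow> real k \<le> \<delta> * real N \<longrightarrow>
       R \<ge> (r + 2) / 3 \<longrightarrow>
       (\<exists>S. open S \<and> cball 0 R \<subseteq> S \<and> f holomorphic_on S) \<longrightarrow>
       norm (taylor_coeff f k) \<le> max_mod R f / (max R 1) ^ (n + 1) * a ^ N)"
proof -
  obtain s c where s: "0 < s" "s < (r + 2) / 3" and c: "0 < c" "c < 1"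
    and contraction: "\<And>R w z. (r + 2) / 3 \<le> R \<Longrightarrow> norm w \<le> r \<Longrightarrow> norm z \<le> s \<Longrightarrow>
      max R 1 * norm (blaschke R w z) \<le> c"
    using blaschke_uniform_contraction[of r "(r + 2) / 3"] assms by auto
  define t where "t = root 4 c"
  have t: "0 < t" "t < 1" "t ^ 4 = c" using c by (simp_all add: t_def real_root_lt_1_iff)
  obtain j where j: "t ^ j < s" using real_arch_pow_inv[OF s(1) t(2)] by blast
  obtain m where m: "t ^ m < 1/4" using real_arch_pow_inv[of "1/4" t] t by auto
  have "0 < j" using j s assms by (cases j) auto
  show ?thesis
  proof (intro exI conjI allI impI)
    show "1 \<le> max 2 (real m)" "0 < t\<^sup>2" "t\<^sup>2 < 1" "0 < 1 / (2 * real j)"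
      using t \<open>0 < j\<close> by (auto simp: power_less_one_iff)
  qed (elim exE conjE, rule taylor_coeff_le_of_many_zeros[OF assms s contraction[folded t(3)] t(1)
      less_imp_le[OF j] less_imp_le[OF m] \<open>0 < j\<close>], assumption+)
qed

end
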